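(* Let $X$ be a set and let $\mathcal{L}$ be a nest on $X$ that $T_0$-separates $X$. Then $M\in\mathcal{L}$ is a lower set if and only if $M$ has no maximal element.
   Context: A nest on $X$ is a family of subsets of $X$ totally ordered by inclusion; it $T_0$-separates $X$ if for all distinct $x,y\in X$ some member contains exactly one of $x,y$. Define $x\triangleleft_{\mathcal{L}} y$ iff there exists $L\in\mathcal{L}$ with $x\in L$ and $y\notin L$. For $A\subseteq X$, ${\downarrow}A=\{x\in X : \exists y\in A,\ x\triangleleft_{\mathcal{L}} y\}$, and $A$ is a lower set if $A={\downarrow}A$. A maximal element of $M$ is some $m\in M$ for which there is no $y\in M$ with $m\triangleleft_{\mathcal{L}} y$. *)

theory Defs
  imports Main
begin

definition is_nest :: "'a set \<Rightarrow> 'a set set \<Rightarrow> bool" where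
  "is_nest X \<L> \<longleftrightarrow> (\<forall>L\<in>\<L>. L \<subseteq> X) \<and> (\<forall>A\<in>\<L>. \<forall>B\<in>\<L>. A \<subseteq> B \<or> B \<subseteq> A)"

definition T0_separates :: "'a set set \<Rightarrow> 'a set \<Rightarrow> bool" where
  "T0_separates \<L> X \<longleftrightarrow>
     (\<forall>x\<in>X. \<forall>y\<in>X. x \<noteq> y \<longrightarrow> (\<exists>L\<in>\<L>. (x \<in> L \<and> y \<notin> L) \<or> (y \<in> L \<and> x \<notin> L)))"

definition nest_rel :: "'a set set \<Rightarrow> 'a \<Rightarrow> 'a \<Rightarrow> bool" where
  "nest_rel \<L> x y \<longleftrightarrow> (\<exists>L\<in>\<L>. x \<in> L \<and> y \<notin> L)"

definition down_set :: "'a set \<Rightarrow> 'a set set \<Rightarrow> 'a set \<Rightarrow> 'a set" where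
  "down_set X \<L> A = {x \<in> X. \<exists>y\<in>A. nest_rel \<L> x y}"

definition lower_set :: "'a set \<Rightarrow> 'a set set \<Rightarrow> 'a set \<Rightarrow> bool" where
  "lower_set X \<L> A \<longleftrightarrow> A = down_set X \<L> A"

definition is_maximal_elem :: "'a set set \<Rightarrow> 'a set \<Rightarrow> 'a \<Rightarrow> bool" where
  "is_maximal_elem \<L> M m \<longleftrightarrow> m \<in> M \<and> \<not> (\<exists>y\<in>M. nest_rel \<L> m y)"

end

theory Submission
  imports Defs
begin

text \<open>A member M of a nest always contains its down-set: if x is in some L \<in> \<L> that misses
  an element of M, then L \<subset> M because \<L> is a chain. Hence M is a lower set exactly when every
  element of M lies strictly below another one, i.e. when M has no maximal element.\<close>

lemma nest_down_set_subset:
  assumes "is_nest X \<L>" and "M \<in> \<L>"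
  shows "down_set X \<L> M \<subseteq> M"
proof
  fix x assume "x \<in> down_set X \<L> M"
  then obtain y L where "y \<in> M" "L \<in> \<L>" "x \<in> L" "y \<notin> L"
    unfolding down_set_def nest_rel_def by blast
  moreover have "L \<subseteq> M \<or> M \<subseteq> L"
    using assms \<open>L \<in> \<L>\<close> unfolding is_nest_def by blast
  ultimately show "x \<in> M" by blast
qed

lemma subset_down_set_iff_no_maximal:
  assumes "M \<subseteq> X"
  shows "M \<subseteq> down_set X \<L> M \<longleftrightarrow> \<not> (\<exists>m. is_maximal_elem \<L> M m)"
  using assms unfolding down_set_def is_maximal_elem_def by blast

theorem proposition3p12:
  fixes X :: "'a set" and \<L> :: "'a set set" and M :: "'a set"
  assumes "is_nest X \<L>"
    and "T0_separates \<L> X"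
    and "M \<in> \<L>"
  shows "lower_set X \<L> M \<longleftrightarrow> \<not> (\<exists>m. is_maximal_elem \<L> M m)"
proof -
  have "M \<subseteq> X" using assms(1,3) unfolding is_nest_def by blast
  moreover have "down_set X \<L> M \<subseteq> M" using assms(1,3) by (rule nest_down_set_subset)
  ultimately show ?thesis
    unfolding lower_set_def using subset_down_set_iff_no_maximal by blast
qed

end
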